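(* Let $k\ge 2$ be an integer and let $R$ and $B$ be disjoint finite sets of points in the plane such that no three points of $R\cup B$ are collinear. If $2\le |B|\le (k-2)|R|+2$, then there exists a non-crossing geometric spanning tree $T$ on $R\cup B$ such that the set of leaves of $T$ is exactly $B$ and the maximum degree of $T$ is at most $k$. Moreover, if $|B|=(k-2)|R|+2$, then $T$ satisfies $\deg_T(x)=k$ for every $x\in R$.
   Context: A geometric spanning tree on a point set $P$ is a tree with vertex set $P$ whose edges are drawn as straight-line segments between their endpoints; it is non-crossing if no two edges intersect except at a common endpoint. $\deg_T(v)$ denotes the degree of vertex $v$ in $T$, and a leaf is a vertex of degree one. *)

theory Defs
  imports "HOL-Analysis.Analysis"
begin

type_synonym point = "real ^ 2"

definition graph_on :: "'a set \<Rightarrow> 'a set set \<Rightarrow> bool" where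
  "graph_on P E \<longleftrightarrow> (\<forall>e\<in>E. \<exists>u v. e = {u, v} \<and> u \<in> P \<and> v \<in> P \<and> u \<noteq> v)"

definition degree :: "'a set set \<Rightarrow> 'a \<Rightarrow> nat" where
  "degree E v = card {e \<in> E. v \<in> e}"

definition connected_graph :: "'a set \<Rightarrow> 'a set set \<Rightarrow> bool" where
  "connected_graph P E \<longleftrightarrow>
     (\<forall>u\<in>P. \<forall>v\<in>P. (u, v) \<in> {(x, y). {x, y} \<in> E}\<^sup>*)"

definition has_cycle :: "'a set set \<Rightarrow> bool" where
  "has_cycle E \<longleftrightarrow> (\<exists>vs. length vs \<ge> 3 \<and> distinct vs \<and>
      (\<forall>i < length vs - 1. {vs ! i, vs ! (i+1)} \<in> E) \<and> {last vs, hd vs} \<in> E)"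

definition is_tree :: "'a set \<Rightarrow> 'a set set \<Rightarrow> bool" where
  "is_tree P E \<longleftrightarrow> graph_on P E \<and> connected_graph P E \<and> \<not> has_cycle E"

definition leaves :: "'a set \<Rightarrow> 'a set set \<Rightarrow> 'a set" where
  "leaves P E = {v \<in> P. degree E v = 1}"

definition non_crossing :: "point set set \<Rightarrow> bool" where
  "non_crossing E \<longleftrightarrow> (\<forall>a b c d. {a, b} \<in> E \<longrightarrow> {c, d} \<in> E \<longrightarrow> {a, b} \<noteq> {c, d} \<longrightarrow>
      closed_segment a b \<inter> closed_segment c d \<subseteq> {a, b} \<inter> {c, d})"

definition no_three_collinear :: "point set \<Rightarrow> bool" where
  "no_three_collinear P \<longleftrightarrow> (\<forall>a\<in>P. \<forall>b\<in>P. \<forall>c\<in>P.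
      a \<noteq> b \<and> b \<noteq> c \<and> a \<noteq> c \<longrightarrow> \<not> collinear {a, b, c})"

end

theory Submission
  imports Defs
begin

(* We prove the stronger statement that every tree degree sequence D on a point set P in general
   position (positive degrees summing to 2 |P| - 2) is realised by a non-crossing spanning tree;
   the theorem follows by giving the points of B degree 1 and distributing |B| - 2 among the
   points of R in portions of at most k - 2.

   For the induction take a point r of maximal degree, so D r >= 2, and give every other point p
   the weight 2 - D p. These weights have absolute value at most D r - 1 and add up to D r.
   Turning a line through r by half a revolution exchanges its two open sides, and the weight of
   a side changes by at most D r - 1 whenever the line passes a point, so some line avoiding the
   points has a side of weight d with 1 <= d <= D r - 1. The points of either side together with
   r, which now gets degree d resp. D r - d, again form a tree degree sequence. The two trees
   obtained by induction lie in opposite half-planes, so they glue at r to a non-crossing tree. *)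

section \<open>Gluing trees at a cut vertex\<close>

lemma graph_on_edgeD:
  assumes "graph_on V E" "{x, y} \<in> E"
  shows "x \<in> V" "y \<in> V" "x \<noteq> y"
proof -
  obtain u v where "{x, y} = {u, v}" "u \<in> V" "v \<in> V" "u \<noteq> v"
    using assms unfolding graph_on_def by blast
  then show "x \<in> V" "y \<in> V" "x \<noteq> y" by (auto simp: doubleton_eq_iff)
qed

lemma graph_on_subset: "graph_on V E \<Longrightarrow> e \<in> E \<Longrightarrow> e \<subseteq> V"
  unfolding graph_on_def by fastforce

lemma graph_on_finite_edges: "graph_on V E \<Longrightarrow> finite V \<Longrightarrow> finite E"
  by (metis Pow_iff finite_Pow_iff finite_subset graph_on_subset subsetI)

lemma graph_on_Un: "graph_on V1 E1 \<Longrightarrow> graph_on V2 E2 \<Longrightarrow> graph_on (V1 \<union> V2) (E1 \<union> E2)"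
  unfolding graph_on_def by (metis Un_iff)

lemma graph_on_edges_disjoint:
  assumes "graph_on V1 E1" "graph_on V2 E2" "V1 \<inter> V2 \<subseteq> {r}"
  shows "E1 \<inter> E2 = {}"
proof (rule ccontr)
  assume "E1 \<inter> E2 \<noteq> {}"
  then obtain e where e: "e \<in> E1" "e \<in> E2" by blast
  then have "card e = 2"
    using assms(1) unfolding graph_on_def by (metis card_2_iff)
  moreover have "e \<subseteq> {r}"
    using e assms graph_on_subset by blast
  ultimately show False
    using card_mono[of "{r}" e] by simp
qed

lemma degree_eq_0:
  assumes "graph_on V E" "v \<notin> V"
  shows "degree E v = 0"
proof -
  have "{e \<in> E. v \<in> e} = {}"
    using assms graph_on_subset by blast
  then show ?thesis unfolding degree_def by (metis card.empty)
qed

lemma degree_Un: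
  assumes "finite E1" "finite E2" "E1 \<inter> E2 = {}"
  shows "degree (E1 \<union> E2) v = degree E1 v + degree E2 v"
proof -
  have "{e \<in> E1 \<union> E2. v \<in> e} = {e \<in> E1. v \<in> e} \<union> {e \<in> E2. v \<in> e}" by blast
  then show ?thesis
    unfolding degree_def using assms by (simp add: card_Un_disjoint disjoint_iff)
qed

lemma degree_Un_cut_vertex:
  assumes g1: "graph_on V1 E1" and g2: "graph_on V2 E2" and "finite V1" "finite V2"
    and cut: "V1 \<inter> V2 = {r}" and "d1 + d2 = D r"
    and deg1: "\<forall>p\<in>V1. degree E1 p = (D(r := d1)) p" and deg2: "\<forall>p\<in>V2. degree E2 p = (D(r := d2)) p"
    and "p \<in> V1 \<union> V2"
  shows "degree (E1 \<union> E2) p = D p"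
proof -
  have "E1 \<inter> E2 = {}" using graph_on_edges_disjoint[OF g1 g2] cut by blast
  then have "degree (E1 \<union> E2) p = degree E1 p + degree E2 p"
    using graph_on_finite_edges g1 g2 \<open>finite V1\<close> \<open>finite V2\<close> by (intro degree_Un) auto
  moreover have "r \<in> V1" "r \<in> V2" using cut by auto
  moreover have "p = r \<or> p \<in> V1 - V2 \<or> p \<in> V2 - V1"
    using \<open>p \<in> V1 \<union> V2\<close> cut by blast
  ultimately show ?thesis
    using deg1 deg2 degree_eq_0[OF g1] degree_eq_0[OF g2] \<open>d1 + d2 = D r\<close> by auto
qed

lemma connected_graph_Un:
  assumes "connected_graph V1 E1" "connected_graph V2 E2" "r \<in> V1" "r \<in> V2"
  shows "connected_graph (V1 \<union> V2) (E1 \<union> E2)"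
proof -
  let ?adj = "\<lambda>E. {(x, y). {x, y} \<in> E}"
  have "?adj E1 \<subseteq> ?adj (E1 \<union> E2)" "?adj E2 \<subseteq> ?adj (E1 \<union> E2)" by auto
  then have reach: "(u, v) \<in> (?adj (E1 \<union> E2))\<^sup>*"
    if "u \<in> V1 \<and> v \<in> V1 \<or> u \<in> V2 \<and> v \<in> V2" for u v
    using that assms(1,2) rtrancl_mono unfolding connected_graph_def by blast
  show ?thesis
    unfolding connected_graph_def
  proof (intro ballI)
    fix u v assume "u \<in> V1 \<union> V2" "v \<in> V1 \<union> V2"
    then show "(u, v) \<in> (?adj (E1 \<union> E2))\<^sup>*"
      using reach[of u r] reach[of r v] assms(3,4) by (meson UnE rtrancl_trans)
  qed
qed

(* The cycles of has_cycle, with the closing edge folded into the index range so that rotating a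
   cycle gives a cycle. *)
definition is_cycle :: "'a set set \<Rightarrow> 'a list \<Rightarrow> bool" where
  "is_cycle E vs \<longleftrightarrow> 3 \<le> length vs \<and> distinct vs \<and>
     (\<forall>i < length vs. {vs ! i, vs ! (Suc i mod length vs)} \<in> E)"

lemma has_cycle_iff: "has_cycle E \<longleftrightarrow> (\<exists>vs. is_cycle E vs)"
proof -
  have "(\<forall>i < length vs. {vs ! i, vs ! (Suc i mod length vs)} \<in> E) \<longleftrightarrow>
        (\<forall>i < length vs - 1. {vs ! i, vs ! (i+1)} \<in> E) \<and> {last vs, hd vs} \<in> E"
    if "3 \<le> length vs" for vs :: "'a list"
  proof -
    have "vs \<noteq> []" using that by auto
    have "i < length vs \<longleftrightarrow> i < length vs - 1 \<or> i = length vs - 1" for i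
      using that by linarith
    moreover have "Suc i mod length vs = Suc i" if "i < length vs - 1" for i
      using that by simp
    moreover have "Suc (length vs - 1) mod length vs = 0"
      using \<open>vs \<noteq> []\<close> by simp
    moreover have "last vs = vs ! (length vs - 1)" "hd vs = vs ! 0"
      using \<open>vs \<noteq> []\<close> by (simp_all add: last_conv_nth hd_conv_nth)
    ultimately show ?thesis by (metis (no_types, lifting) Suc_eq_plus1)
  qed
  then show ?thesis unfolding has_cycle_def is_cycle_def by blast
qed

lemma is_cycle_first_edge:
  assumes "is_cycle E vs"
  shows "{vs ! 0, vs ! 1} \<in> E"
proof -
  have "3 \<le> length vs" and "\<forall>i < length vs. {vs ! i, vs ! (Suc i mod length vs)} \<in> E"
    using assms unfolding is_cycle_def by blast+
  moreover have "Suc 0 mod length vs = 1" using \<open>3 \<le> length vs\<close> by simp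
  ultimately show ?thesis by force
qed

lemma is_cycle_rotate:
  assumes "is_cycle E vs"
  shows "is_cycle E (rotate n vs)"
proof -
  let ?L = "length vs"
  have "{rotate n vs ! i, rotate n vs ! (Suc i mod ?L)} \<in> E" if "i < ?L" for i
  proof -
    let ?j = "(n + i) mod ?L"
    have "0 < ?L" using that by linarith
    then have "Suc i mod ?L < ?L" by simp
    then have "rotate n vs ! i = vs ! ?j" "rotate n vs ! (Suc i mod ?L) = vs ! (Suc ?j mod ?L)"
      using that by (simp_all add: nth_rotate mod_add_right_eq mod_Suc_eq)
    moreover have "?j < ?L" using \<open>0 < ?L\<close> by simp
    ultimately show ?thesis using assms unfolding is_cycle_def by simp
  qed
  then show ?thesis using assms unfolding is_cycle_def by simp
qed

lemma is_cycle_rotate_to_front: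
  assumes "is_cycle E vs"
  obtains ws where "is_cycle E ws" "r \<notin> set (tl ws)"
proof (cases "r \<in> set vs")
  case True
  then obtain i where i: "i < length vs" "vs ! i = r" by (auto simp: in_set_conv_nth)
  let ?ws = "rotate i vs"
  have "is_cycle E ?ws" using assms by (rule is_cycle_rotate)
  moreover have "?ws = r # tl ?ws"
  proof -
    have "vs \<noteq> []" using i by auto
    then have "hd ?ws = r" using i by (simp add: hd_rotate_conv_nth)
    moreover have "?ws \<noteq> []" using \<open>vs \<noteq> []\<close> by simp
    ultimately show ?thesis by (metis list.collapse)
  qed
  moreover have "distinct ?ws" using calculation(1) unfolding is_cycle_def by simp
  ultimately show ?thesis using that by (metis distinct.simps(2))
next
  case False
  then show ?thesis using that assms by (metis list.sel(2) list.set_sel(2))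
qed

lemma is_cycle_subset: "is_cycle E vs \<Longrightarrow> graph_on V E \<Longrightarrow> set vs \<subseteq> V"
  unfolding is_cycle_def by (metis graph_on_edgeD(1) in_set_conv_nth subsetI)

(* Apart from its head the cycle avoids the cut vertex, so starting from vs ! 1 it never leaves V1. *)
lemma is_cycle_Un_cut_vertex:
  assumes cycle: "is_cycle (E1 \<union> E2) vs" and g1: "graph_on V1 E1" and g2: "graph_on V2 E2"
    and cut: "V1 \<inter> V2 \<subseteq> {r}" and r: "r \<notin> set (tl vs)" and start: "vs ! 1 \<in> V1"
  shows "is_cycle E1 vs"
proof -
  let ?L = "length vs"
  have L: "3 \<le> ?L" and edge: "\<And>i. i < ?L \<Longrightarrow> {vs ! i, vs ! (Suc i mod ?L)} \<in> E1 \<union> E2"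
    using cycle unfolding is_cycle_def by auto
  then have "vs \<noteq> []" by auto
  have step: "{x, y} \<in> E1 \<and> y \<in> V1" if "{x, y} \<in> E1 \<union> E2" "x \<in> V1" "x \<noteq> r" for x y
    using that graph_on_edgeD[OF g1] graph_on_edgeD[OF g2] cut by blast
  have not_r: "vs ! j \<noteq> r" if "0 < j" "j < ?L" for j
  proof -
    have "j - 1 < length (tl vs)" "tl vs ! (j - 1) = vs ! j"
      using that by (simp_all add: nth_tl)
    then show ?thesis using r nth_mem by metis
  qed
  have in_V1: "vs ! j \<in> V1" if "0 < j" "j < ?L" for j
    using that
  proof (induction j)
    case 0
    then show ?case by simp
  next
    case (Suc j)
    show ?case
    proof (cases "j = 0")
      case True
      with start show ?thesis by simp
    next
      case False
      then have "{vs ! j, vs ! Suc j} \<in> E1 \<union> E2"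
        using edge[of j] Suc.prems by simp
      then show ?thesis using step Suc.IH not_r False Suc.prems by simp
    qed
  qed
  have "{vs ! i, vs ! (Suc i mod ?L)} \<in> E1" if "i < ?L" for i
  proof (cases "i = 0")
    case True
    have "{vs ! 1, vs ! 0} \<in> E1 \<union> E2"
      using edge[of 0] L \<open>vs \<noteq> []\<close> by (simp add: insert_commute)
    then have "{vs ! 1, vs ! 0} \<in> E1"
      using step[of "vs ! 1" "vs ! 0"] start not_r[of 1] L by simp
    then show ?thesis using True L by (simp add: insert_commute)
  next
    case False
    then show ?thesis using step in_V1[of i] not_r[of i] edge[of i] that by blast
  qed
  then show ?thesis using cycle unfolding is_cycle_def by simp
qed

lemma is_tree_Un_cut_vertex:
  assumes t1: "is_tree V1 E1" and t2: "is_tree V2 E2" and cut: "V1 \<inter> V2 = {r}"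
  shows "is_tree (V1 \<union> V2) (E1 \<union> E2)"
proof -
  have g1: "graph_on V1 E1" and g2: "graph_on V2 E2"
    and acyclic1: "\<not> has_cycle E1" and acyclic2: "\<not> has_cycle E2"
    using t1 t2 unfolding is_tree_def by auto
  have "\<not> has_cycle (E1 \<union> E2)"
  proof
    assume "has_cycle (E1 \<union> E2)"
    then obtain vs where "is_cycle (E1 \<union> E2) vs" by (auto simp: has_cycle_iff)
    then obtain ws where ws: "is_cycle (E1 \<union> E2) ws" "r \<notin> set (tl ws)"
      by (rule is_cycle_rotate_to_front)
    then have "{ws ! 0, ws ! 1} \<in> E1 \<union> E2" by (intro is_cycle_first_edge)
    then consider "ws ! 1 \<in> V1" | "ws ! 1 \<in> V2"
      using graph_on_edgeD(2)[OF g1] graph_on_edgeD(2)[OF g2] by blast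
    then show False
    proof cases
      case 1
      then have "is_cycle E1 ws"
        using is_cycle_Un_cut_vertex[OF ws(1) g1 g2 _ ws(2)] cut by blast
      then show False using acyclic1 by (auto simp: has_cycle_iff)
    next
      case 2
      then have "is_cycle E2 ws"
        using is_cycle_Un_cut_vertex[of E2 E1 ws V2 V1] ws g1 g2 cut by (auto simp: Un_commute)
      then show False using acyclic2 by (auto simp: has_cycle_iff)
    qed
  qed
  moreover have "connected_graph (V1 \<union> V2) (E1 \<union> E2)"
    using t1 t2 cut connected_graph_Un[of V1 E1 V2 E2 r] unfolding is_tree_def by blast
  ultimately show ?thesis
    using g1 g2 graph_on_Un unfolding is_tree_def by blast
qed

lemma is_tree_single_edge:
  assumes "a \<noteq> b"
  shows "is_tree {a, b} {{a, b}}"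
proof -
  have graph: "graph_on {a, b} {{a, b}}"
    unfolding graph_on_def using assms by blast
  have "(a, b) \<in> {(x, y). {x, y} \<in> {{a, b}}}\<^sup>*" "(b, a) \<in> {(x, y). {x, y} \<in> {{a, b}}}\<^sup>*"
    by (auto simp: insert_commute)
  then have "connected_graph {a, b} {{a, b}}"
    unfolding connected_graph_def by blast
  moreover have "\<not> is_cycle {{a, b}} vs" for vs
  proof
    assume cycle: "is_cycle {{a, b}} vs"
    then have "card (set vs) \<le> card {a, b}"
      using is_cycle_subset[OF cycle graph] by (simp add: card_mono)
    moreover have "card (set vs) \<ge> 3"
      using cycle distinct_card unfolding is_cycle_def by metis
    ultimately show False
      using card_2_iff assms by fastforce
  qed
  ultimately show ?thesis
    using graph unfolding is_tree_def has_cycle_iff by blast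
qed

section \<open>Edges on opposite sides of a line\<close>

lemma closed_segment_meets_halfplane_boundary:
  fixes a b r x n :: "'a :: real_inner"
  assumes a: "a = r \<or> 0 < n \<bullet> (a - r)" and b: "b = r \<or> 0 < n \<bullet> (b - r)"
    and x: "x \<in> closed_segment a b" and le: "n \<bullet> (x - r) \<le> 0"
  shows "x = r \<and> r \<in> {a, b}"
proof -
  obtain u where u: "0 \<le> u" "u \<le> 1" "x = (1 - u) *\<^sub>R a + u *\<^sub>R b"
    using x by (auto simp: in_segment)
  define A where "A = n \<bullet> (a - r)"
  define B where "B = n \<bullet> (b - r)"
  have "x - r = (1 - u) *\<^sub>R (a - r) + u *\<^sub>R (b - r)"
    using u(3) by (simp add: algebra_simps)
  then have "n \<bullet> (x - r) = (1 - u) * A + u * B"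
    unfolding A_def B_def by (simp add: inner_add_right)
  moreover have "A \<ge> 0" "a \<noteq> r \<Longrightarrow> A > 0" "B \<ge> 0" "b \<noteq> r \<Longrightarrow> B > 0"
    using a b unfolding A_def B_def by auto
  ultimately have zero: "(1 - u) * A = 0" "u * B = 0"
    using le u(1,2) by (smt (verit) mult_nonneg_nonneg)+
  show ?thesis
  proof (cases "a = r")
    case False
    then have "u = 1" using zero(1) \<open>a \<noteq> r \<Longrightarrow> A > 0\<close> by simp
    then show ?thesis using zero(2) \<open>b \<noteq> r \<Longrightarrow> B > 0\<close> u(3) by fastforce
  next
    case True
    show ?thesis
    proof (cases "b = r")
      case False
      then have "u = 0" using zero(2) \<open>b \<noteq> r \<Longrightarrow> B > 0\<close> by simp
      then show ?thesis using u(3) True by simp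
    next
      case True
      then show ?thesis using u(3) \<open>a = r\<close> by (simp flip: scaleR_add_left)
    qed
  qed
qed

lemma closed_segments_opposite_sides_inter:
  fixes a b c d r n :: "'a :: real_inner"
  assumes "a = r \<or> 0 < n \<bullet> (a - r)" "b = r \<or> 0 < n \<bullet> (b - r)"
    and "c = r \<or> n \<bullet> (c - r) < 0" "d = r \<or> n \<bullet> (d - r) < 0"
  shows "closed_segment a b \<inter> closed_segment c d \<subseteq> {a, b} \<inter> {c, d}"
proof
  fix x assume x: "x \<in> closed_segment a b \<inter> closed_segment c d"
  have "c = r \<or> 0 < (- n) \<bullet> (c - r)" "d = r \<or> 0 < (- n) \<bullet> (d - r)"
    using assms(3,4) by auto
  note cd_side = closed_segment_meets_halfplane_boundary[OF this]
  show "x \<in> {a, b} \<inter> {c, d}"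
  proof (cases "n \<bullet> (x - r) \<le> 0")
    case True
    then show ?thesis
      using closed_segment_meets_halfplane_boundary[OF assms(1,2)] cd_side x by fastforce
  next
    case False
    then show ?thesis using cd_side x by fastforce
  qed
qed

lemma non_crossing_Un_opposite_sides:
  assumes "non_crossing E1" "non_crossing E2"
    and g1: "graph_on (insert r S1) E1" and g2: "graph_on (insert r S2) E2"
    and S1: "\<forall>p\<in>S1. 0 < n \<bullet> (p - r)" and S2: "\<forall>p\<in>S2. n \<bullet> (p - r) < 0"
  shows "non_crossing (E1 \<union> E2)"
proof -
  have side1: "x = r \<or> 0 < n \<bullet> (x - r)" "y = r \<or> 0 < n \<bullet> (y - r)" if "{x, y} \<in> E1" for x y
    using graph_on_edgeD[OF g1 that] S1 by auto
  have side2: "x = r \<or> n \<bullet> (x - r) < 0" "y = r \<or> n \<bullet> (y - r) < 0" if "{x, y} \<in> E2" for x y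
    using graph_on_edgeD[OF g2 that] S2 by auto
  have "closed_segment a b \<inter> closed_segment c d \<subseteq> {a, b} \<inter> {c, d}"
    if "{a, b} \<in> E1" "{c, d} \<in> E2" for a b c d
    using closed_segments_opposite_sides_inter side1[OF that(1)] side2[OF that(2)] by blast
  then show ?thesis
    using assms(1,2) unfolding non_crossing_def by (metis Int_commute Un_iff)
qed

section \<open>Rotating a line about a point\<close>

lemma collinear_if_cross_eq_0:
  fixes r p q :: point
  assumes "p \<noteq> r" and "(p - r) $ 1 * (q - r) $ 2 = (p - r) $ 2 * (q - r) $ 1"
  shows "collinear {r, p, q}"
proof -
  define u where "u = p - r"
  define v where "v = q - r"
  have eq_iff: "x = y \<longleftrightarrow> x $ 1 = y $ 1 \<and> x $ 2 = y $ 2" for x y :: point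
    by (simp add: vec_eq_iff forall_2)
  have cross: "u $ 1 * v $ 2 = u $ 2 * v $ 1"
    using assms(2) unfolding u_def v_def .
  have "u \<noteq> 0" using assms(1) unfolding u_def by simp
  then consider "u $ 1 \<noteq> 0" | "u $ 2 \<noteq> 0" using eq_iff[of u 0] by auto
  then have "\<exists>c. v = c *\<^sub>R u"
  proof cases
    case 1
    then have "v = (v $ 1 / u $ 1) *\<^sub>R u" using cross by (simp add: eq_iff field_simps)
    then show ?thesis by blast
  next
    case 2
    then have "v = (v $ 2 / u $ 2) *\<^sub>R u" using cross by (simp add: eq_iff field_simps)
    then show ?thesis by blast
  qed
  then have "collinear {0, u, v}" using collinear_lemma by blast
  moreover have "collinear {p, r, q} \<longleftrightarrow> collinear {0, p - r, q - r}" by (rule collinear_3) simp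
  moreover have "{p, r, q} = {r, p, q}" by blast
  ultimately show ?thesis unfolding u_def v_def by simp
qed

(* \<nu> t is the normal of a line through r that turns by half a revolution as t runs through the
   reals; the line passes through p exactly at t = \<tau> p. *)
lemma pencil_of_lines:
  fixes r :: point and P :: "point set"
  assumes fin: "finite P" and r: "r \<notin> P"
    and general: "\<forall>p\<in>P. \<forall>q\<in>P. p \<noteq> q \<longrightarrow> \<not> collinear {r, p, q}"
  obtains \<beta> \<tau> :: "point \<Rightarrow> real" and \<nu> :: "real \<Rightarrow> point"
  where "\<And>p. p \<in> P \<Longrightarrow> \<beta> p \<noteq> 0" and "inj_on \<tau> P"
    and "\<And>t p. p \<in> P \<Longrightarrow> \<nu> t \<bullet> (p - r) = \<beta> p * (\<tau> p - t)"
proof -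
  let ?slope = "\<lambda>p. - ((p - r) $ 1) / ((p - r) $ 2)"
  obtain s :: real where s: "s \<notin> ?slope ` P"
    using ex_new_if_finite[OF infinite_UNIV_char_0] fin by blast
  define \<alpha> where "\<alpha> p = (p - r) $ 2 - s * (p - r) $ 1" for p
  define \<beta> where "\<beta> p = (p - r) $ 1 + s * (p - r) $ 2" for p
  define \<tau> where "\<tau> p = \<alpha> p / \<beta> p" for p
  define \<nu> where "\<nu> t = (vector [- (s + t), 1 - t * s] :: point)" for t
  have \<beta>: "\<beta> p \<noteq> 0" if "p \<in> P" for p
  proof
    assume \<beta>0: "\<beta> p = 0"
    have "p - r \<noteq> 0" using that r by auto
    then have "(p - r) $ 2 \<noteq> 0"
      using \<beta>0 unfolding \<beta>_def by (auto simp: vec_eq_iff forall_2)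
    then have "s = ?slope p"
      using \<beta>0 unfolding \<beta>_def by (simp add: field_simps)
    then show False using s that by blast
  qed
  have "\<nu> t \<bullet> (p - r) = \<beta> p * (\<tau> p - t)" if "p \<in> P" for p t
    using \<beta>[OF that] unfolding \<nu>_def \<tau>_def \<alpha>_def \<beta>_def
    by (simp add: inner_vec_def sum_2 field_simps)
  moreover have "inj_on \<tau> P"
  proof (rule inj_onI, rule ccontr)
    fix p q assume p: "p \<in> P" and q: "q \<in> P" and eq: "\<tau> p = \<tau> q" and "p \<noteq> q"
    have "\<alpha> p * \<beta> q = \<alpha> q * \<beta> p"
      using eq \<beta>[OF p] \<beta>[OF q] unfolding \<tau>_def by (simp add: field_simps)
    then have "(1 + s\<^sup>2) * ((p - r) $ 1 * (q - r) $ 2 - (p - r) $ 2 * (q - r) $ 1) = 0"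
      unfolding \<alpha>_def \<beta>_def by (simp add: algebra_simps power2_eq_square)
    moreover have "1 + s\<^sup>2 > 0" by (simp add: add_pos_nonneg)
    ultimately have "(p - r) $ 1 * (q - r) $ 2 = (p - r) $ 2 * (q - r) $ 1" by simp
    moreover have "p \<noteq> r" using p r by blast
    ultimately have "collinear {r, p, q}" by (rule collinear_if_cross_eq_0[rotated])
    then show False using general p q \<open>p \<noteq> q\<close> by blast
  qed
  ultimately show ?thesis using that \<beta> by blast
qed

lemma ivt_bounded_jumps:
  fixes f :: "real \<Rightarrow> int" and C :: "real set"
  assumes fin: "finite C"
    and jump: "\<And>x y. x < y \<Longrightarrow> card (C \<inter> {x..y}) \<le> 1 \<Longrightarrow> \<bar>f y - f x\<bar> \<le> K"
  shows "x < y \<Longrightarrow> f x \<le> 0 \<and> K + 1 \<le> f y \<or> K + 1 \<le> f x \<and> f y \<le> 0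
    \<Longrightarrow> \<exists>t. t \<notin> C \<and> 1 \<le> f t \<and> f t \<le> K"
proof (induction "card (C \<inter> {x..y})" arbitrary: x y rule: less_induct)
  case less
  show ?case
  proof (cases "card (C \<inter> {x..y}) \<le> 1")
    case True
    then show ?thesis using jump[of x y] less.prems by linarith
  next
    case False
    then obtain c1 c2 where c: "c1 \<in> C \<inter> {x..y}" "c2 \<in> C \<inter> {x..y}" "c1 < c2"
      using fin by (metis card_le_Suc0_iff_eq finite_Int linorder_neq_iff One_nat_def)
    have "infinite ({c1<..<c2} - C)" using c(3) fin by (simp add: Diff_infinite_finite)
    then obtain m where "m \<in> {c1<..<c2} - C" using infinite_imp_nonempty by blast
    then have m: "c1 < m" "m < c2" "m \<notin> C" by auto
    have "x < m" "m < y" using c m by auto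
    then have "C \<inter> {x..m} \<subseteq> C \<inter> {x..y}" "C \<inter> {m..y} \<subseteq> C \<inter> {x..y}" by auto
    moreover have "c2 \<notin> C \<inter> {x..m}" "c1 \<notin> C \<inter> {m..y}" using m by auto
    ultimately have "C \<inter> {x..m} \<subset> C \<inter> {x..y}" "C \<inter> {m..y} \<subset> C \<inter> {x..y}"
      using c(1,2) by blast+
    then have smaller:
        "card (C \<inter> {x..m}) < card (C \<inter> {x..y})" "card (C \<inter> {m..y}) < card (C \<inter> {x..y})"
      using fin by (simp_all add: psubset_card_mono)
    consider "1 \<le> f m \<and> f m \<le> K"
      | "f x \<le> 0 \<and> K + 1 \<le> f m \<or> K + 1 \<le> f x \<and> f m \<le> 0"
      | "f m \<le> 0 \<and> K + 1 \<le> f y \<or> K + 1 \<le> f m \<and> f y \<le> 0"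
      using less.prems(2) by linarith
    then show ?thesis
    proof cases
      case 1
      then show ?thesis using m(3) by blast
    next
      case 2
      then show ?thesis using less.hyps[OF smaller(1) \<open>x < m\<close>] by blast
    next
      case 3
      then show ?thesis using less.hyps[OF smaller(2) \<open>m < y\<close>] by blast
    qed
  qed
qed

lemma abs_sum_diff_le_card_sym_diff:
  fixes w :: "'a \<Rightarrow> 'b :: linordered_idom"
  assumes fin: "finite A" "finite A'" and bound: "\<forall>p\<in>A \<union> A'. \<bar>w p\<bar> \<le> K"
  shows "\<bar>sum w A' - sum w A\<bar> \<le> of_nat (card ((A' - A) \<union> (A - A'))) * K"
proof -
  have "sum w A = sum w (A \<inter> A') + sum w (A - A')" "sum w A' = sum w (A' \<inter> A) + sum w (A' - A)"
    using fin by (simp_all add: sum.Int_Diff)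
  then have "\<bar>sum w A' - sum w A\<bar> = \<bar>sum w (A' - A) - sum w (A - A')\<bar>"
    by (simp add: Int_commute)
  also have "\<dots> \<le> sum (\<lambda>p. \<bar>w p\<bar>) (A' - A) + sum (\<lambda>p. \<bar>w p\<bar>) (A - A')"
    by (rule order_trans[OF abs_triangle_ineq4 add_mono[OF sum_abs sum_abs]])
  also have "\<dots> = sum (\<lambda>p. \<bar>w p\<bar>) ((A' - A) \<union> (A - A'))"
    using fin by (simp add: sum.union_disjoint Diff_Int_distrib2)
  also have "\<dots> \<le> of_nat (card ((A' - A) \<union> (A - A'))) * K"
    using bound by (intro sum_bounded_above) auto
  finally show ?thesis .
qed

lemma abs_side_weight_diff_le:
  fixes \<beta> \<tau> :: "'a \<Rightarrow> real" and w :: "'a \<Rightarrow> int"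
  assumes fin: "finite P" and inj: "inj_on \<tau> P" and bound: "\<forall>p\<in>P. \<bar>w p\<bar> \<le> K" and "0 \<le> K"
    and "x < y" and one: "card (\<tau> ` P \<inter> {x..y}) \<le> 1"
  shows "\<bar>sum w {p\<in>P. 0 < \<beta> p * (\<tau> p - y)} - sum w {p\<in>P. 0 < \<beta> p * (\<tau> p - x)}\<bar> \<le> K"
proof -
  define side where "side t = {p\<in>P. 0 < \<beta> p * (\<tau> p - t)}" for t
  let ?D = "{p\<in>P. \<tau> p \<in> {x..y}}"
  have same: "p \<in> side x \<longleftrightarrow> p \<in> side y" if "p \<in> P" "\<tau> p \<notin> {x..y}" for p
  proof -
    have "0 < \<tau> p - x \<longleftrightarrow> 0 < \<tau> p - y" "\<tau> p - x \<noteq> 0" "\<tau> p - y \<noteq> 0"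
      using that \<open>x < y\<close> by auto
    then show ?thesis unfolding side_def using that by (auto simp: zero_less_mult_iff)
  qed
  have "inj_on \<tau> ?D" by (rule inj_on_subset[OF inj]) blast
  then have "card ?D = card (\<tau> ` ?D)" by (rule card_image[symmetric])
  also have "\<tau> ` ?D = \<tau> ` P \<inter> {x..y}" by auto
  finally have "card ?D \<le> 1" using one by simp
  moreover have "side t \<subseteq> P" "finite (side t)" for t
    using fin unfolding side_def by auto
  moreover have "card ((side y - side x) \<union> (side x - side y)) \<le> card ?D"
    using fin same calculation(2) by (intro card_mono) auto
  ultimately have "card ((side y - side x) \<union> (side x - side y)) \<le> 1" by linarith
  have "\<bar>sum w (side y) - sum w (side x)\<bar> \<le> of_nat (card ((side y - side x) \<union> (side x - side y))) * K"
    using \<open>side _ \<subseteq> P\<close> \<open>finite (side _)\<close> bound by (intro abs_sum_diff_le_card_sym_diff) auto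
  also have "\<dots> \<le> 1 * K"
    using \<open>card (_ \<union> _) \<le> 1\<close> \<open>0 \<le> K\<close> by (intro mult_right_mono) simp_all
  finally show ?thesis unfolding side_def by simp
qed

lemma side_weights_beyond_all:
  fixes \<beta> \<tau> :: "'a \<Rightarrow> real" and w :: "'a \<Rightarrow> 'b :: comm_monoid_add"
  assumes "finite P" and "\<forall>p\<in>P. \<beta> p \<noteq> 0" and "\<forall>p\<in>P. lo < \<tau> p \<and> \<tau> p < hi"
  shows "sum w {p\<in>P. 0 < \<beta> p * (\<tau> p - lo)} + sum w {p\<in>P. 0 < \<beta> p * (\<tau> p - hi)} = sum w P"
proof -
  have "{p\<in>P. 0 < \<beta> p * (\<tau> p - lo)} = {p\<in>P. 0 < \<beta> p}"
    "{p\<in>P. 0 < \<beta> p * (\<tau> p - hi)} = {p\<in>P. \<beta> p < 0}"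
    using assms(3) by (auto simp: zero_less_mult_iff)
  moreover have "{p\<in>P. 0 < \<beta> p} \<union> {p\<in>P. \<beta> p < 0} = P"
    using assms(2) by (auto simp: linorder_neq_iff)
  moreover have "sum w ({p\<in>P. 0 < \<beta> p} \<union> {p\<in>P. \<beta> p < 0})
      = sum w {p\<in>P. 0 < \<beta> p} + sum w {p\<in>P. \<beta> p < 0}"
    using assms(1) by (intro sum.union_disjoint) auto
  ultimately show ?thesis by simp
qed

lemma line_through_point_with_side_weight:
  fixes r :: point and P :: "point set" and w :: "point \<Rightarrow> int"
  assumes fin: "finite P" and r: "r \<notin> P"
    and general: "\<forall>p\<in>P. \<forall>q\<in>P. p \<noteq> q \<longrightarrow> \<not> collinear {r, p, q}"
    and bound: "\<forall>p\<in>P. \<bar>w p\<bar> \<le> K" and total: "sum w P = K + 1" and "0 \<le> K"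
  obtains n where "\<forall>p\<in>P. n \<bullet> (p - r) \<noteq> 0"
    and "1 \<le> sum w {p\<in>P. 0 < n \<bullet> (p - r)}" and "sum w {p\<in>P. 0 < n \<bullet> (p - r)} \<le> K"
proof -
  obtain \<beta> \<tau> :: "point \<Rightarrow> real" and \<nu> :: "real \<Rightarrow> point"
    where \<beta>: "\<And>p. p \<in> P \<Longrightarrow> \<beta> p \<noteq> 0" and "inj_on \<tau> P"
      and \<nu>: "\<And>t p. p \<in> P \<Longrightarrow> \<nu> t \<bullet> (p - r) = \<beta> p * (\<tau> p - t)"
    using pencil_of_lines[OF fin r general] by blast
  define f where "f t = sum w {p\<in>P. 0 < \<beta> p * (\<tau> p - t)}" for t
  define C where "C = \<tau> ` P"
  have "finite C" using fin unfolding C_def by simp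
  have jump: "\<bar>f y - f x\<bar> \<le> K" if "x < y" "card (C \<inter> {x..y}) \<le> 1" for x y
    using abs_side_weight_diff_le[OF fin \<open>inj_on \<tau> P\<close> bound \<open>0 \<le> K\<close>] that
    unfolding f_def C_def by blast
  define lo where "lo = Min (insert 0 C) - 1"
  define hi where "hi = Max (insert 0 C) + 1"
  have bounds: "lo < c \<and> c < hi" if "c \<in> insert 0 C" for c
  proof -
    have "Min (insert 0 C) \<le> c" "c \<le> Max (insert 0 C)"
      using that \<open>finite C\<close> by auto
    then show ?thesis unfolding lo_def hi_def by linarith
  qed
  then have "lo < hi" by force
  have between: "\<forall>p\<in>P. lo < \<tau> p \<and> \<tau> p < hi"
    using bounds unfolding C_def by blast
  have "lo \<notin> C" using bounds by blast
  have "f lo + f hi = K + 1"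
    unfolding f_def using side_weights_beyond_all[of P \<beta> lo \<tau> hi w] fin between \<beta> total by auto
  have "\<exists>t. t \<notin> C \<and> 1 \<le> f t \<and> f t \<le> K"
  proof (cases "1 \<le> f lo \<and> f lo \<le> K")
    case True
    then show ?thesis using \<open>lo \<notin> C\<close> by blast
  next
    case False
    then have "f lo \<le> 0 \<and> K + 1 \<le> f hi \<or> K + 1 \<le> f lo \<and> f hi \<le> 0"
      using \<open>f lo + f hi = K + 1\<close> by linarith
    then show ?thesis
      using ivt_bounded_jumps[where f = f and C = C and K = K, OF \<open>finite C\<close> jump \<open>lo < hi\<close>] by blast
  qed
  then obtain t where "t \<notin> C" "1 \<le> f t" "f t \<le> K" by blast
  moreover have "\<forall>p\<in>P. \<nu> t \<bullet> (p - r) \<noteq> 0"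
    using \<open>t \<notin> C\<close> \<beta> \<nu> unfolding C_def by fastforce
  moreover have "{p\<in>P. 0 < \<nu> t \<bullet> (p - r)} = {p\<in>P. 0 < \<beta> p * (\<tau> p - t)}"
    using \<nu> by auto
  ultimately show ?thesis using that unfolding f_def by auto
qed

section \<open>Non-crossing trees with prescribed degrees\<close>

definition tree_degree_sequence :: "'a set \<Rightarrow> ('a \<Rightarrow> nat) \<Rightarrow> bool" where
  "tree_degree_sequence P D \<longleftrightarrow> finite P \<and> 2 \<le> card P \<and> (\<forall>p\<in>P. 1 \<le> D p)
     \<and> (\<Sum>p\<in>P. D p) = 2 * (card P - 1)"

lemma no_three_collinear_subset: "no_three_collinear P \<Longrightarrow> Q \<subseteq> P \<Longrightarrow> no_three_collinear Q"
  unfolding no_three_collinear_def by blast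

lemma tree_degree_sequence_insert:
  fixes D :: "'a \<Rightarrow> nat"
  assumes "finite S" "r \<notin> S" "\<forall>p\<in>S. 1 \<le> D p" and pos: "1 \<le> (\<Sum>p\<in>S. 2 - int (D p))"
  shows "tree_degree_sequence (insert r S) (D(r := nat (\<Sum>p\<in>S. 2 - int (D p))))"
proof -
  let ?\<sigma> = "\<Sum>p\<in>S. 2 - int (D p)"
  have "S \<noteq> {}" using pos by auto
  then have "2 \<le> card (insert r S)" using assms(1,2) by (simp add: Suc_le_eq card_gt_0_iff)
  have "(\<Sum>p\<in>S. int (D p)) = 2 * int (card S) - ?\<sigma>"
    by (simp add: sum_subtractf)
  then have "int (nat ?\<sigma> + (\<Sum>p\<in>S. D p)) = int (2 * card S)"
    using pos by simp
  then have "nat ?\<sigma> + (\<Sum>p\<in>S. D p) = 2 * card S"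
    by (rule of_nat_eq_iff[THEN iffD1])
  then have "nat ?\<sigma> + (\<Sum>p\<in>S. D p) = 2 * (card (insert r S) - 1)"
    using assms(1,2) by simp
  moreover have "(\<Sum>p\<in>S. (D(r := nat ?\<sigma>)) p) = (\<Sum>p\<in>S. D p)"
    using assms(2) by (intro sum.cong) auto
  ultimately show ?thesis
    using assms \<open>2 \<le> card (insert r S)\<close> pos unfolding tree_degree_sequence_def by auto
qed

lemma tree_degree_sequence_max:
  fixes D :: "'a \<Rightarrow> nat"
  assumes seq: "tree_degree_sequence P D" and "3 \<le> card P"
    and "r \<in> P" and r_max: "\<forall>p\<in>P. D p \<le> D r"
  shows "2 \<le> D r" and "\<forall>p\<in>P - {r}. \<bar>2 - int (D p)\<bar> \<le> int (D r) - 1"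
    and "(\<Sum>p\<in>P - {r}. 2 - int (D p)) = int (D r)"
proof -
  have fin: "finite P" and pos: "\<forall>p\<in>P. 1 \<le> D p" and total: "(\<Sum>p\<in>P. D p) = 2 * (card P - 1)"
    using seq unfolding tree_degree_sequence_def by auto
  show "2 \<le> D r"
  proof (rule ccontr)
    assume "\<not> 2 \<le> D r"
    have "D p = 1" if "p \<in> P" for p
    proof -
      have "1 \<le> D p" "D p \<le> D r" using pos r_max that by auto
      then show ?thesis using \<open>\<not> 2 \<le> D r\<close> by linarith
    qed
    then have "(\<Sum>p\<in>P. D p) = (\<Sum>p\<in>P. 1)" by (rule sum.cong[OF refl])
    then show False using total \<open>3 \<le> card P\<close> by simp
  qed
  then show "\<forall>p\<in>P - {r}. \<bar>2 - int (D p)\<bar> \<le> int (D r) - 1"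
    using pos r_max by fastforce
  have "int (\<Sum>p\<in>P. D p) = int (D r) + (\<Sum>p\<in>P - {r}. int (D p))"
    using fin \<open>r \<in> P\<close> by (simp add: sum.remove)
  moreover have "card (P - {r}) = card P - 1" "1 \<le> card P"
    using fin \<open>r \<in> P\<close> \<open>3 \<le> card P\<close> by auto
  ultimately show "(\<Sum>p\<in>P - {r}. 2 - int (D p)) = int (D r)"
    using total by (simp add: sum_subtractf of_nat_diff)
qed

lemma tree_degree_sequence_split:
  fixes P :: "point set" and D :: "point \<Rightarrow> nat"
  assumes seq: "tree_degree_sequence P D" and "3 \<le> card P" and general: "no_three_collinear P"
  obtains r n S1 S2 d1 d2 where "insert r S1 \<union> insert r S2 = P" "insert r S1 \<inter> insert r S2 = {r}"
    and "\<forall>p\<in>S1. 0 < n \<bullet> (p - r)" "\<forall>p\<in>S2. n \<bullet> (p - r) < 0"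
    and "tree_degree_sequence (insert r S1) (D(r := d1))"
    and "tree_degree_sequence (insert r S2) (D(r := d2))" and "d1 + d2 = D r"
proof -
  have fin: "finite P" and pos: "\<forall>p\<in>P. 1 \<le> D p"
    using seq unfolding tree_degree_sequence_def by auto
  have "P \<noteq> {}" using \<open>3 \<le> card P\<close> by auto
  then obtain r where "r \<in> P" and r_max: "\<forall>p\<in>P. D p \<le> D r"
    using fin Max_in[of "D ` P"] Max_ge[of "D ` P"] by fastforce
  define P' where "P' = P - {r}"
  define w where "w p = 2 - int (D p)" for p
  define K where "K = int (D r) - 1"
  note weights = tree_degree_sequence_max[OF seq \<open>3 \<le> card P\<close> \<open>r \<in> P\<close> r_max]
  have "finite P'" "r \<notin> P'" using fin unfolding P'_def by auto
  moreover have "\<forall>p\<in>P'. \<forall>q\<in>P'. p \<noteq> q \<longrightarrow> \<not> collinear {r, p, q}"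
    using general \<open>r \<in> P\<close> unfolding no_three_collinear_def P'_def by (metis DiffE singletonI)
  ultimately obtain n where nonzero: "\<forall>p\<in>P'. n \<bullet> (p - r) \<noteq> 0"
    and weight: "1 \<le> sum w {p\<in>P'. 0 < n \<bullet> (p - r)}" "sum w {p\<in>P'. 0 < n \<bullet> (p - r)} \<le> K"
    using line_through_point_with_side_weight[of P' r w K] weights
    unfolding w_def K_def P'_def by auto
  define S1 where "S1 = {p\<in>P'. 0 < n \<bullet> (p - r)}"
  define S2 where "S2 = {p\<in>P'. n \<bullet> (p - r) < 0}"
  have "S1 \<union> S2 = P'" "S1 \<inter> S2 = {}"
    using nonzero unfolding S1_def S2_def by (auto simp: linorder_neq_iff)
  moreover have "sum w P' = K + 1" using weights(3) unfolding w_def K_def P'_def by simp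
  ultimately have "sum w S1 + sum w S2 = K + 1"
    using \<open>finite P'\<close> by (metis finite_Un sum.union_disjoint)
  then have "1 \<le> sum w S1" "1 \<le> sum w S2" "nat (sum w S1) + nat (sum w S2) = D r"
    using weight unfolding S1_def K_def by linarith+
  moreover have "finite S" "r \<notin> S" "\<forall>p\<in>S. 1 \<le> D p" if "S \<subseteq> P'" for S
    using that finite_subset[OF that \<open>finite P'\<close>] pos unfolding P'_def by auto
  moreover have "S1 \<subseteq> P'" "S2 \<subseteq> P'" using \<open>S1 \<union> S2 = P'\<close> by auto
  ultimately have "tree_degree_sequence (insert r S1) (D(r := nat (sum w S1)))"
    "tree_degree_sequence (insert r S2) (D(r := nat (sum w S2)))"
    unfolding w_def by (auto intro: tree_degree_sequence_insert)
  moreover have "insert r S1 \<union> insert r S2 = P" "insert r S1 \<inter> insert r S2 = {r}"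
    using \<open>S1 \<union> S2 = P'\<close> \<open>S1 \<inter> S2 = {}\<close> \<open>r \<in> P\<close> unfolding P'_def by auto
  moreover have "\<forall>p\<in>S1. 0 < n \<bullet> (p - r)" "\<forall>p\<in>S2. n \<bullet> (p - r) < 0"
    unfolding S1_def S2_def by auto
  ultimately show thesis
    using that \<open>nat (sum w S1) + nat (sum w S2) = D r\<close> by blast
qed

lemma non_crossing_tree_with_degrees_two_points:
  assumes "tree_degree_sequence P D" and "card P = 2"
  shows "\<exists>E. is_tree P E \<and> non_crossing E \<and> (\<forall>p\<in>P. degree E p = D p)"
proof -
  obtain a b where P: "P = {a, b}" "a \<noteq> b" using assms(2) by (meson card_2_iff)
  then have "D a = 1" "D b = 1"
    using assms(1) unfolding tree_degree_sequence_def by auto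
  moreover have "degree {{a, b}} a = 1" "degree {{a, b}} b = 1"
    unfolding degree_def by (simp_all add: Collect_conv_if)
  moreover have "non_crossing {{a, b}}" unfolding non_crossing_def by blast
  ultimately show ?thesis
    using is_tree_single_edge[OF P(2)] P(1) by (intro exI[of _ "{{a, b}}"]) auto
qed

lemma card_less_if_cut_vertex:
  assumes "finite P" "A \<union> B = P" "A \<inter> B = {r}" "2 \<le> card B"
  shows "card A < card P"
proof -
  have "B \<noteq> {r}" using assms(4) by auto
  then have "A \<subset> P" using assms(2,3) by blast
  then show ?thesis using assms(1) by (simp add: psubset_card_mono)
qed

theorem non_crossing_tree_with_degrees:
  fixes P :: "point set" and D :: "point \<Rightarrow> nat"
  assumes "tree_degree_sequence P D" and "no_three_collinear P"
  shows "\<exists>E. is_tree P E \<and> non_crossing E \<and> (\<forall>p\<in>P. degree E p = D p)"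
  using assms
proof (induction "card P" arbitrary: P D rule: less_induct)
  case less
  have "finite P" "2 \<le> card P" using less.prems(1) unfolding tree_degree_sequence_def by auto
  show ?case
  proof (cases "card P = 2")
    case True
    with less.prems(1) show ?thesis by (rule non_crossing_tree_with_degrees_two_points)
  next
    case False
    then have "3 \<le> card P" using \<open>2 \<le> card P\<close> by linarith
    obtain r n S1 S2 d1 d2 where cover: "insert r S1 \<union> insert r S2 = P"
      and cut: "insert r S1 \<inter> insert r S2 = {r}"
      and sides: "\<forall>p\<in>S1. 0 < n \<bullet> (p - r)" "\<forall>p\<in>S2. n \<bullet> (p - r) < 0"
      and seq: "tree_degree_sequence (insert r S1) (D(r := d1))"
        "tree_degree_sequence (insert r S2) (D(r := d2))"
      and "d1 + d2 = D r"
      by (rule tree_degree_sequence_split[OF less.prems(1) \<open>3 \<le> card P\<close> less.prems(2)])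
    have finite: "finite (insert r S1)" "finite (insert r S2)"
      and "2 \<le> card (insert r S1)" "2 \<le> card (insert r S2)"
      using seq unfolding tree_degree_sequence_def by auto
    then have "card (insert r S1) < card P" "card (insert r S2) < card P"
      using card_less_if_cut_vertex[OF \<open>finite P\<close>] cover cut by (metis Int_commute Un_commute)+
    moreover have "no_three_collinear (insert r S1)" "no_three_collinear (insert r S2)"
      using less.prems(2) cover no_three_collinear_subset by blast+
    ultimately obtain E1 E2 where E1: "is_tree (insert r S1) E1" "non_crossing E1"
        "\<forall>p\<in>insert r S1. degree E1 p = (D(r := d1)) p"
      and E2: "is_tree (insert r S2) E2" "non_crossing E2"
        "\<forall>p\<in>insert r S2. degree E2 p = (D(r := d2)) p"
      using less.hyps seq by meson
    have g1: "graph_on (insert r S1) E1" and g2: "graph_on (insert r S2) E2"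
      using E1(1) E2(1) unfolding is_tree_def by auto
    show ?thesis
      using is_tree_Un_cut_vertex[OF E1(1) E2(1) cut] cover
        non_crossing_Un_opposite_sides[OF E1(2) E2(2) g1 g2 sides]
        degree_Un_cut_vertex[OF g1 g2 finite cut \<open>d1 + d2 = D r\<close> E1(3) E2(3)] by auto
  qed
qed

lemma exists_bounded_summands:
  fixes c :: nat
  assumes "finite A"
  shows "m \<le> c * card A \<Longrightarrow> \<exists>e. (\<forall>x\<in>A. e x \<le> c) \<and> sum e A = m"
  using assms
proof (induction A arbitrary: m rule: finite_induct)
  case empty
  then show ?case by simp
next
  case (insert x F)
  have "m - min c m \<le> c * card F"
    using insert.prems insert.hyps by (auto simp: min_def)
  then obtain e where e: "\<forall>y\<in>F. e y \<le> c" "sum e F = m - min c m"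
    using insert.IH by blast
  have "sum (e(x := min c m)) F = sum e F"
    using insert.hyps(2) by (intro sum.cong) auto
  then have "sum (e(x := min c m)) (insert x F) = min c m + sum e F"
    using insert.hyps by simp
  then show ?case
    using e by (intro exI[of _ "e(x := min c m)"]) auto
qed

lemma tree_degree_sequence_leaves_and_branches:
  fixes R B :: "'a set" and e :: "'a \<Rightarrow> nat"
  assumes "finite R" "finite B" "R \<inter> B = {}" "2 \<le> card B" and "sum e R = card B - 2"
  shows "tree_degree_sequence (R \<union> B) (\<lambda>p. if p \<in> B then 1 else e p + 2)"
proof -
  have "(\<Sum>p\<in>R \<union> B. if p \<in> B then 1 else e p + 2) = (\<Sum>p\<in>R. e p + 2) + (\<Sum>p\<in>B. 1)"
    using assms(1-3) by (simp add: sum.union_disjoint disjoint_iff cong: sum.cong)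
  also have "\<dots> = sum e R + 2 * card R + card B"
    by (subst sum.distrib) simp
  also have "\<dots> = 2 * (card (R \<union> B) - 1)"
    using assms by (simp add: card_Un_disjoint)
  finally show ?thesis
    using assms(1-4) card_mono[of "R \<union> B" B] unfolding tree_degree_sequence_def by auto
qed

theorem corollary2:
  fixes k :: nat and R B :: "point set"
  assumes "k \<ge> 2"
    and "finite R" and "finite B" and "R \<inter> B = {}"
    and "no_three_collinear (R \<union> B)"
    and "2 \<le> card B" and "card B \<le> (k - 2) * card R + 2"
  shows "\<exists>E. is_tree (R \<union> B) E \<and> non_crossing E \<and> leaves (R \<union> B) E = B
            \<and> (\<forall>v \<in> R \<union> B. degree E v \<le> k)
            \<and> (card B = (k - 2) * card R + 2 \<longrightarrow> (\<forall>x \<in> R. degree E x = k))"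
proof -
  have "card B - 2 \<le> (k - 2) * card R" using assms(7) by linarith
  then obtain e where e: "\<forall>x\<in>R. e x \<le> k - 2" "sum e R = card B - 2"
    using exists_bounded_summands[OF assms(2)] by blast
  define D where "D p = (if p \<in> B then 1 else e p + 2)" for p
  have "tree_degree_sequence (R \<union> B) D"
    unfolding D_def using assms(2-4,6) e(2) by (rule tree_degree_sequence_leaves_and_branches)
  then obtain E where E: "is_tree (R \<union> B) E" "non_crossing E" "\<forall>p\<in>R \<union> B. degree E p = D p"
    using non_crossing_tree_with_degrees assms(5) by blast
  have "leaves (R \<union> B) E = B"
    using E(3) assms(4) unfolding leaves_def D_def by auto
  moreover have "\<forall>v\<in>R \<union> B. degree E v \<le> k"
    using E(3) e(1) assms(1) unfolding D_def by auto
  moreover have "\<forall>x\<in>R. degree E x = k" if "card B = (k - 2) * card R + 2"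
  proof -
    have "sum e R = (\<Sum>x\<in>R. k - 2)" using that e(2) by simp
    then have "\<forall>x\<in>R. e x = k - 2" using sum_mono_inv[of e R] e(1) assms(2) by blast
    then show ?thesis using E(3) assms(1,4) unfolding D_def by auto
  qed
  ultimately show ?thesis using E(1,2) by blast
qed

end
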